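(* $\mathrm{Sort}(\mathrm{SC}_{\underline{23}1})$ is not a permutation class.
   Context: $\mathfrak S_n$ is the set of permutations of $\{1,\dots,n\}$. A permutation $\pi$ contains a (classical) permutation $\tau$ if some subsequence of $\pi$ has the same relative order as $\tau$. A permutation class is a set $\Pi$ of permutations such that every permutation contained in some $\pi\in\Pi$ is also in $\Pi$. A vincular pattern is a permutation with some entries underlined; a sequence contains it if it has a subsequence with the same relative order in which entries corresponding to adjacent underlined entries occupy consecutive positions. An occurrence of $\underline{23}1$ is $a_j a_{j+1} a_l$ with $l>j+1$ and $a_l<a_j<a_{j+1}$. For a pattern $\sigma$, the map $\mathrm{SC}_\sigma$ acts on $\tau$: read entries left to right; when the next entry $x$ is read, if pushing $x$ yields a stack whose entries read top to bottom (stack adjacency = consecutive positions) avoid $\sigma$, push $x$; otherwise pop the top stack entry to the output and repeat. At the end pop all remaining entries; the output is $\mathrm{SC}_\sigma(\tau)$. West's stack-sorting map is $s=\mathrm{SC}_{21}$. $\mathrm{Sort}_n(\mathrm{SC}_\sigma)=\{\tau\in\mathfrak S_n : s(\mathrm{SC}_\sigma(\tau))=12\cdots n\}$ and $\mathrm{Sort}(\mathrm{SC}_\sigma)=\bigcup_{n\ge1}\mathrm{Sort}_n(\mathrm{SC}_\sigma)$. *)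

theory Defs
  imports Main
begin

definition is_perm :: "nat list \<Rightarrow> bool" where
  "is_perm p \<longleftrightarrow> length p \<ge> 1 \<and> distinct p \<and> set p = {1..length p}"

definition contains :: "nat list \<Rightarrow> nat list \<Rightarrow> bool" where
  "contains p t \<longleftrightarrow> (\<exists>is. length is = length t \<and> sorted_wrt (<) is \<and>
      (\<forall>i<length is. is ! i < length p) \<and>
      (\<forall>i<length t. \<forall>j<length t. (p ! (is ! i) < p ! (is ! j)) \<longleftrightarrow> (t ! i < t ! j)))"

definition perm_class :: "nat list set \<Rightarrow> bool" where
  "perm_class P \<longleftrightarrow> (\<forall>p\<in>P. is_perm p) \<and>
     (\<forall>p\<in>P. \<forall>t. is_perm t \<and> contains p t \<longrightarrow> t \<in> P)"

definition contains_23_1 :: "nat list \<Rightarrow> bool" where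
  "contains_23_1 xs \<longleftrightarrow> (\<exists>j l. j + 1 < l \<and> l < length xs \<and>
      xs ! l < xs ! j \<and> xs ! j < xs ! (j + 1))"

text \<open>The stack is a list whose head is the top,
so the stack read top to bottom is the list itself.\<close>

function sc :: "(nat list \<Rightarrow> bool) \<Rightarrow> nat list \<Rightarrow> nat list \<Rightarrow> nat list" where
  "sc ok [] st = st"
| "sc ok (x # xs) st =
     (if ok (x # st) then sc ok xs (x # st)
      else (case st of [] \<Rightarrow> sc ok xs [x] | y # st' \<Rightarrow> y # sc ok (x # xs) st'))"
  by pat_completeness auto
termination
  by (relation "measure (\<lambda>(ok, inp, st). 2 * length inp + length st)") auto

definition SC :: "(nat list \<Rightarrow> bool) \<Rightarrow> nat list \<Rightarrow> nat list" where
  "SC ok t = sc ok t []"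

definition west_s :: "nat list \<Rightarrow> nat list" where
  "west_s t = SC (\<lambda>st. \<not> contains st [2, 1]) t"

definition SC_23_1 :: "nat list \<Rightarrow> nat list" where
  "SC_23_1 t = SC (\<lambda>st. \<not> contains_23_1 st) t"

definition Sort_SC_23_1 :: "nat list set" where
  "Sort_SC_23_1 = {t. is_perm t \<and> west_s (SC_23_1 t) = [1..<length t + 1]}"

end

theory Submission
  imports Defs
begin

text \<open>The permutation 25314 is sorted by s after SC_23_1 (the stack machine outputs 54132,
  which avoids 231), whereas its pattern 2413 is not: SC_23_1 turns 2413 into 3142, whose
  occurrence 342 of 231 makes West's map fail.\<close>

lemma contains_21_iff_not_sorted: "contains xs [2, 1] \<longleftrightarrow> \<not> sorted xs"
proof
  assume "contains xs [2, 1]"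
  then obtain "is" where len: "length is = length [2, 1::nat]" and incr: "sorted_wrt (<) is"
    and bound: "\<forall>i<length is. is ! i < length xs"
    and order: "\<forall>i<length [2, 1::nat]. \<forall>j<length [2, 1::nat].
      (xs ! (is ! i) < xs ! (is ! j)) \<longleftrightarrow> ([2, 1::nat] ! i < [2, 1] ! j)"
    unfolding contains_def by blast
  obtain a b where ab: "is = [a, b]"
    using len by (cases "is"; cases "tl is") auto
  have "a < b" "b < length xs" "xs ! b < xs ! a"
    using incr bound[rule_format, of 1] order[rule_format, of 1 0] ab by auto
  then show "\<not> sorted xs"
    using sorted_nth_mono[of xs a b] by auto
next
  assume "\<not> sorted xs"
  then obtain a b where "a < b" "b < length xs" "xs ! b < xs ! a"
    by (auto simp: sorted_iff_nth_mono_less not_le)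
  then show "contains xs [2, 1]"
    unfolding contains_def by (intro exI[of _ "[a, b]"]) (auto simp: less_Suc_eq)
qed

lemma west_s_eq_SC_sorted: "west_s t = SC sorted t"
  unfolding west_s_def contains_21_iff_not_sorted by simp

lemma contains_23_1_code:
  "contains_23_1 xs \<longleftrightarrow> (\<exists>j\<in>set [0..<length xs]. \<exists>l\<in>set [0..<length xs].
      j + 1 < l \<and> xs ! l < xs ! j \<and> xs ! j < xs ! (j + 1))"
  (is "_ \<longleftrightarrow> (\<exists>j\<in>_. \<exists>l\<in>_. ?occ j l)")
proof
  assume "contains_23_1 xs"
  then obtain j l where "?occ j l" "l < length xs"
    unfolding contains_23_1_def by blast
  then show "\<exists>j\<in>set [0..<length xs]. \<exists>l\<in>set [0..<length xs]. ?occ j l"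
    by (intro bexI[of _ j] bexI[of _ l]) auto
next
  assume "\<exists>j\<in>set [0..<length xs]. \<exists>l\<in>set [0..<length xs]. ?occ j l"
  then obtain j l where "?occ j l" "l < length xs"
    by auto
  then show "contains_23_1 xs"
    unfolding contains_23_1_def by (intro exI[of _ j] exI[of _ l]) simp
qed

lemma SC_23_1_25314: "SC_23_1 [2, 5, 3, 1, 4] = [5, 4, 1, 3, 2]"
  unfolding SC_23_1_def SC_def contains_23_1_code by code_simp

lemma SC_23_1_2413: "SC_23_1 [2, 4, 1, 3] = [3, 1, 4, 2]"
  unfolding SC_23_1_def SC_def contains_23_1_code by code_simp

lemma west_s_54132: "west_s [5, 4, 1, 3, 2] = [1, 2, 3, 4, 5]"
  unfolding west_s_eq_SC_sorted SC_def by code_simp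

lemma west_s_3142: "west_s [3, 1, 4, 2] = [1, 3, 2, 4]"
  unfolding west_s_eq_SC_sorted SC_def by code_simp

lemma perm_25314_sortable: "[2, 5, 3, 1, 4] \<in> Sort_SC_23_1"
  unfolding Sort_SC_23_1_def mem_Collect_eq SC_23_1_25314 west_s_54132
  by (auto simp: is_perm_def upt_rec)

lemma perm_2413_not_sortable: "[2, 4, 1, 3] \<notin> Sort_SC_23_1"
  unfolding Sort_SC_23_1_def mem_Collect_eq SC_23_1_2413 west_s_3142
  by (simp add: upt_rec)

lemma is_perm_2413: "is_perm [2, 4, 1, 3]"
  by (auto simp: is_perm_def)

lemma contains_25314_2413: "contains [2, 5, 3, 1, 4] [2, 4, 1, 3]"
  unfolding contains_def
  by (intro exI[of _ "[0, 1, 3, 4]"]) (simp add: less_Suc_eq numeral_eq_Suc)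

theorem mainTheorem17:
  shows "\<not> perm_class Sort_SC_23_1"
  unfolding perm_class_def
  using perm_25314_sortable perm_2413_not_sortable is_perm_2413 contains_25314_2413 by blast

end
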